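(* For all positive integers $m,n,w,d$ with $w\le m$, $$A(m,n,w,d)\le C\left(\binom{m}{w},n,\left\lceil\frac{d}{w}\right\rceil\right).$$
   Context: $J(m,w)$ denotes the set of binary vectors of length $m$ and Hamming weight $w$. Elements of $J(m,w)^n$ are identified with $m\times n$ binary matrices all of whose columns have weight $w$, with binary Hamming distance. $A(m,n,w,d)$ is the maximum cardinality of a nonempty subset of $J(m,w)^n$ with pairwise Hamming distances at least $2d$. $C(q,n,d)$ is the maximum cardinality of a nonempty subset of $[q]^n$, $[q]=\{0,\dots,q-1\}$, with pairwise Hamming distances (number of differing coordinates) at least $d$. *)

theory Defs
  imports Complex_Main
begin

definition J :: "nat \<Rightarrow> nat \<Rightarrow> bool list set" where
  "J m w = {v. length v = m \<and> card {i. i < m \<and> v ! i} = w}"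

text \<open>Elements of J(m,w)^n: lists of n columns (an m x n binary matrix).\<close>
definition Jn :: "nat \<Rightarrow> nat \<Rightarrow> nat \<Rightarrow> bool list list set" where
  "Jn m n w = {X. length X = n \<and> (\<forall>j<n. X ! j \<in> J m w)}"

definition bin_dist :: "nat \<Rightarrow> nat \<Rightarrow> bool list list \<Rightarrow> bool list list \<Rightarrow> nat" where
  "bin_dist m n X Y = card {(i, j). i < m \<and> j < n \<and> X ! j ! i \<noteq> Y ! j ! i}"

definition A :: "nat \<Rightarrow> nat \<Rightarrow> nat \<Rightarrow> nat \<Rightarrow> nat" where
  "A m n w d = Max {card S | S. S \<noteq> {} \<and> S \<subseteq> Jn m n w \<and>
      (\<forall>X\<in>S. \<forall>Y\<in>S. X \<noteq> Y \<longrightarrow> bin_dist m n X Y \<ge> 2 * d)}"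

definition words :: "nat \<Rightarrow> nat \<Rightarrow> nat list set" where
  "words q n = {x. length x = n \<and> (\<forall>i<n. x ! i < q)}"

definition ham_dist :: "nat \<Rightarrow> nat list \<Rightarrow> nat list \<Rightarrow> nat" where
  "ham_dist n x y = card {i. i < n \<and> x ! i \<noteq> y ! i}"

definition C :: "nat \<Rightarrow> nat \<Rightarrow> nat \<Rightarrow> nat" where
  "C q n d = Max {card S | S. S \<noteq> {} \<and> S \<subseteq> words q n \<and>
      (\<forall>x\<in>S. \<forall>y\<in>S. x \<noteq> y \<longrightarrow> ham_dist n x y \<ge> d)}"

end

theory Submission
  imports Defs
begin

text \<open>Number the (m choose w) possible columns by a bijection h from J(m,w) onto [m choose w]
  and apply h to every column. Two matrices whose columns differ in k places differ in at most
  2wk entries, since two columns of weight w differ in at most 2w positions. Hence a code with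
  binary distance at least 2d becomes a code over [m choose w] of the same size with Hamming distance at
  least d/w, and therefore at least \<lceil>d/w\<rceil>.\<close>

lemma bij_betw_J_subsets:
  "bij_betw (\<lambda>v. {i. i < m \<and> v ! i}) (J m w) {B. B \<subseteq> {..<m} \<and> card B = w}"
proof (rule bij_betw_imageI)
  show "inj_on (\<lambda>v. {i. i < m \<and> v ! i}) (J m w)"
  proof (rule inj_onI)
    fix u v assume "u \<in> J m w" "v \<in> J m w"
      and "{i. i < m \<and> u ! i} = {i. i < m \<and> v ! i}"
    then have "length u = m" "length v = m" "\<forall>i<m. u ! i = v ! i"
      by (auto simp: J_def set_eq_iff)
    then show "u = v" by (simp add: nth_equalityI)
  qed
  show "(\<lambda>v. {i. i < m \<and> v ! i}) ` J m w = {B. B \<subseteq> {..<m} \<and> card B = w}"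
  proof (intro equalityI subsetI)
    fix B assume B: "B \<in> {B. B \<subseteq> {..<m} \<and> card B = w}"
    let ?v = "map (\<lambda>i. i \<in> B) [0..<m]"
    have "{i. i < m \<and> ?v ! i} = B" using B by auto
    moreover from this B have "?v \<in> J m w" by (simp add: J_def)
    ultimately show "B \<in> (\<lambda>v. {i. i < m \<and> v ! i}) ` J m w" by blast
  qed (auto simp: J_def)
qed

lemma finite_J: "finite (J m w)"
proof -
  have "finite {B. B \<subseteq> {..<m} \<and> card B = w}" by simp
  then show ?thesis using bij_betw_finite[OF bij_betw_J_subsets] by blast
qed

lemma card_J: "card (J m w) = m choose w"
  using bij_betw_same_card[OF bij_betw_J_subsets] n_subsets[of "{..<m}" w] by simp

lemma J_nonempty: "w \<le> m \<Longrightarrow> J m w \<noteq> {}"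
  using card_J[of m w] by (metis card.empty zero_less_binomial not_less0)

lemma finite_Jn: "finite (Jn m n w)"
  by (rule finite_subset[OF _ finite_lists_length_eq[OF finite_J[of m w], of n]])
     (auto simp: Jn_def in_set_conv_nth)

lemma set_Jn_subset_J: "X \<in> Jn m n w \<Longrightarrow> set X \<subseteq> J m w"
  by (auto simp: Jn_def in_set_conv_nth)

lemma Jn_nonempty: "w \<le> m \<Longrightarrow> Jn m n w \<noteq> {}"
proof -
  assume "w \<le> m"
  then obtain v where "v \<in> J m w" using J_nonempty by blast
  then have "replicate n v \<in> Jn m n w" by (simp add: Jn_def)
  then show ?thesis by blast
qed

lemma finite_words: "finite (words q n)"
  by (rule finite_subset[OF _ finite_lists_length_eq[of "{..<q}" n]])
     (auto simp: words_def in_set_conv_nth)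

lemma A_attained:
  assumes "Jn m n w \<noteq> {}"
  obtains S where "S \<noteq> {}" "S \<subseteq> Jn m n w"
    "\<forall>X\<in>S. \<forall>Y\<in>S. X \<noteq> Y \<longrightarrow> bin_dist m n X Y \<ge> 2 * d" "A m n w d = card S"
proof -
  let ?sizes = "{card S | S. S \<noteq> {} \<and> S \<subseteq> Jn m n w \<and>
      (\<forall>X\<in>S. \<forall>Y\<in>S. X \<noteq> Y \<longrightarrow> bin_dist m n X Y \<ge> 2 * d)}"
  have "finite ?sizes"
    by (rule finite_subset[of _ "{..card (Jn m n w)}"]) (auto intro: card_mono[OF finite_Jn])
  moreover obtain X where "X \<in> Jn m n w" using assms by blast
  then have "card {X} \<in> ?sizes" by (intro CollectI exI[of _ "{X}"]) simp
  then have "?sizes \<noteq> {}" by blast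
  ultimately have "Max ?sizes \<in> ?sizes" by (rule Max_in)
  then have "A m n w d \<in> ?sizes" by (simp only: A_def)
  then show ?thesis using that by blast
qed

lemma card_le_C:
  assumes "S \<noteq> {}" "S \<subseteq> words q n" "\<forall>x\<in>S. \<forall>y\<in>S. x \<noteq> y \<longrightarrow> ham_dist n x y \<ge> d"
  shows "card S \<le> C q n d"
  unfolding C_def
proof (rule Max_ge)
  show "finite {card S | S. S \<noteq> {} \<and> S \<subseteq> words q n \<and>
      (\<forall>x\<in>S. \<forall>y\<in>S. x \<noteq> y \<longrightarrow> ham_dist n x y \<ge> d)}"
    by (rule finite_subset[of _ "{..card (words q n)}"]) (auto intro: card_mono[OF finite_words])
qed (use assms in blast)

lemma card_diff_positions_J_le:
  assumes "u \<in> J m w" "v \<in> J m w"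
  shows "card {i. i < m \<and> u ! i \<noteq> v ! i} \<le> 2 * w"
proof -
  have "card {i. i < m \<and> u ! i \<noteq> v ! i} \<le> card ({i. i < m \<and> u ! i} \<union> {i. i < m \<and> v ! i})"
    by (rule card_mono) auto
  also have "\<dots> \<le> card {i. i < m \<and> u ! i} + card {i. i < m \<and> v ! i}"
    by (rule card_Un_le)
  finally show ?thesis using assms by (simp add: J_def)
qed

lemma bin_dist_le_diff_columns:
  assumes X: "X \<in> Jn m n w" and Y: "Y \<in> Jn m n w"
  shows "bin_dist m n X Y \<le> 2 * w * card {j. j < n \<and> X ! j \<noteq> Y ! j}"
proof -
  let ?D = "{j. j < n \<and> X ! j \<noteq> Y ! j}"
  let ?entries = "\<lambda>j. (\<lambda>i. (i, j)) ` {i. i < m \<and> X ! j ! i \<noteq> Y ! j ! i}"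
  have "bin_dist m n X Y \<le> card (\<Union>j\<in>?D. ?entries j)"
    unfolding bin_dist_def by (rule card_mono) auto
  also have "\<dots> \<le> (\<Sum>j\<in>?D. card (?entries j))"
    by (rule card_UN_le) auto
  also have "\<dots> \<le> (\<Sum>j\<in>?D. 2 * w)"
  proof (rule sum_mono)
    fix j assume "j \<in> ?D"
    then have "X ! j \<in> J m w" "Y ! j \<in> J m w" using X Y by (auto simp: Jn_def)
    then have "card {i. i < m \<and> X ! j ! i \<noteq> Y ! j ! i} \<le> 2 * w"
      by (rule card_diff_positions_J_le)
    moreover have "card (?entries j) \<le> card {i. i < m \<and> X ! j ! i \<noteq> Y ! j ! i}"
      by (rule card_image_le) simp
    ultimately show "card (?entries j) \<le> 2 * w" by linarith
  qed
  finally show ?thesis by (simp add: mult.commute)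
qed

lemma nat_ceiling_divide_le:
  assumes "0 < w" "d \<le> w * k"
  shows "nat \<lceil>real d / real w\<rceil> \<le> k"
proof -
  have "real d \<le> real w * real k" using assms(2) by (metis of_nat_le_iff of_nat_mult)
  then have "real d / real w \<le> real k" using assms(1) by (simp add: divide_le_eq mult.commute)
  then show ?thesis by (simp add: ceiling_le_iff nat_le_iff)
qed

lemma ham_dist_map_columns:
  assumes h: "inj_on h (J m w)" and X: "X \<in> Jn m n w" and Y: "Y \<in> Jn m n w"
  shows "ham_dist n (map h X) (map h Y) = card {j. j < n \<and> X ! j \<noteq> Y ! j}"
proof -
  have "map h X ! j = map h Y ! j \<longleftrightarrow> X ! j = Y ! j" if "j < n" for j
    using X Y that inj_on_eq_iff[OF h] by (auto simp: Jn_def)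
  then have "{j. j < n \<and> map h X ! j \<noteq> map h Y ! j} = {j. j < n \<and> X ! j \<noteq> Y ! j}"
    by blast
  then show ?thesis by (simp add: ham_dist_def)
qed

lemma map_columns_in_words:
  assumes "h ` J m w \<subseteq> {..<q}" "X \<in> Jn m n w"
  shows "map h X \<in> words q n"
  using assms by (auto simp: Jn_def words_def)

lemma card_le_C_map_columns:
  assumes h_inj: "inj_on h (J m w)" and h_range: "h ` J m w \<subseteq> {..<q}" and "0 < w"
    and S: "S \<noteq> {}" "S \<subseteq> Jn m n w"
    and dist: "\<forall>X\<in>S. \<forall>Y\<in>S. X \<noteq> Y \<longrightarrow> bin_dist m n X Y \<ge> 2 * d"
  shows "card S \<le> C q n (nat \<lceil>real d / real w\<rceil>)"
proof -
  have "inj_on (map h) S"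
    using S(2) set_Jn_subset_J by (intro inj_on_mapI inj_on_subset[OF h_inj]) blast
  moreover have "card (map h ` S) \<le> C q n (nat \<lceil>real d / real w\<rceil>)"
  proof (rule card_le_C)
    show "map h ` S \<subseteq> words q n"
      using S(2) map_columns_in_words[OF h_range] by blast
    show "\<forall>x\<in>map h ` S. \<forall>y\<in>map h ` S. x \<noteq> y \<longrightarrow>
        nat \<lceil>real d / real w\<rceil> \<le> ham_dist n x y"
    proof (intro ballI impI)
      fix x y assume "x \<in> map h ` S" "y \<in> map h ` S" "x \<noteq> y"
      then obtain X Y where XY: "X \<in> S" "Y \<in> S" "X \<noteq> Y" "x = map h X" "y = map h Y"
        by blast
      then have X: "X \<in> Jn m n w" and Y: "Y \<in> Jn m n w" using S(2) by blast+
      have "2 * d \<le> 2 * w * card {j. j < n \<and> X ! j \<noteq> Y ! j}"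
        using dist XY bin_dist_le_diff_columns[OF X Y] by (meson le_trans)
      then have "nat \<lceil>real d / real w\<rceil> \<le> card {j. j < n \<and> X ! j \<noteq> Y ! j}"
        using \<open>0 < w\<close> by (intro nat_ceiling_divide_le) auto
      then show "nat \<lceil>real d / real w\<rceil> \<le> ham_dist n x y"
        using ham_dist_map_columns[OF h_inj X Y] XY by simp
    qed
  qed (use S(1) in blast)
  ultimately show ?thesis by (simp add: card_image)
qed

theorem proposition10:
  fixes m n w d :: nat
  assumes "0 < m" "0 < n" "0 < w" "0 < d" "w \<le> m"
  shows "A m n w d \<le> C (m choose w) n (nat \<lceil>real d / real w\<rceil>)"
proof -
  obtain S where S: "S \<noteq> {}" "S \<subseteq> Jn m n w"
    and dist: "\<forall>X\<in>S. \<forall>Y\<in>S. X \<noteq> Y \<longrightarrow> bin_dist m n X Y \<ge> 2 * d"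
    and A_eq: "A m n w d = card S"
    by (rule A_attained[OF Jn_nonempty[OF \<open>w \<le> m\<close>]])
  obtain h where "bij_betw h (J m w) {0..<card (J m w)}"
    using ex_bij_betw_finite_nat[OF finite_J] by blast
  then have h_inj: "inj_on h (J m w)" and h_range: "h ` J m w \<subseteq> {..<m choose w}"
    by (auto simp: bij_betw_def card_J)
  show ?thesis
    unfolding A_eq by (rule card_le_C_map_columns[OF h_inj h_range \<open>0 < w\<close> S dist])
qed

end
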